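(* (1) Let $(Y^*,Y,X)$ be random variables with $Y^*,Y\in\{0,1\}$, $X=(\tilde X,Z)\in\mathcal X$, $\tilde X\in\tilde{\mathcal X}$, $Z$ taking values in a finite set $\mathcal Z$. Let $p(x)=\Pr(Y=1\mid X=x)$, $p^*(x)=\Pr(Y^*=1\mid X=x)$, $\underline p_z(\tilde x)=\inf_{z\in\mathcal Z}p(\tilde x,z)$, $\bar p_z(\tilde x)=\sup_{z\in\mathcal Z}p(\tilde x,z)$. Assume: for all $x=(\tilde x,z)$ and $y\in\{0,1\}$, $\Pr(Y=1-y\mid Y^*=y,X=x)=\Pr(Y=1-y\mid Y^*=y,\tilde X=\tilde x)$; for all $\tilde x$, $\Pr(Y=0\mid Y^*=1,\tilde x)+\Pr(Y=1\mid Y^*=0,\tilde x)\le1$; for all $\tilde x$, $\bar p_z(\tilde x)>0$ and $\underline p_z(\tilde x)<1$; and for all $\tilde x$, $\Pr(Y=1\mid Y^*=0,\tilde x)\le\Pr(Y=0\mid Y^*=1,\tilde x)$. Then for every $x=(\tilde x,z)\in\mathcal X$, $$p^*(x)\in\left[\frac{p(x)-\min\{\underline p_z(\tilde x),1-\bar p_z(\tilde x)\}}{1-\min\{\underline p_z(\tilde x),1-\bar p_z(\tilde x)\}},\ \frac{p(x)}{\bar p_z(\tilde x)}\right].$$ (2) Let $(Y^*,Y,X,W)$ be random variables with $Y^*,Y\in\{0,1\}$, $X\in\mathcal X$, $W$ taking values in a finite set of reals $\mathcal W$. Let $p^*(x)=\Pr(Y^*=1\mid X=x)$, $p_W(x,w)=\Pr(Y=1\mid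 X=x,W=w)$, $\underline p_w(x,w)=\inf_{\tilde w\le w}p_W(x,\tilde w)$, $\bar p_w(x,w)=\sup_{\tilde w\le w}p_W(x,\tilde w)$ (over $\tilde w\in\mathcal W$). Assume: $\Pr(Y^*=1\mid x,w)=p^*(x)$ for all $x,w$; for all $x$, $y\in\{0,1\}$ and $w_1>w_2$ in $\mathcal W$, $\Pr(Y=1-y\mid Y^*=y,x,w_1)\le\Pr(Y=1-y\mid Y^*=y,x,w_2)$; for all $x,w$, $\Pr(Y=1\mid Y^*=0,x,w)+\Pr(Y=0\mid Y^*=1,x,w)\le1$ and $0<p_W(x,w)<1$; and for all $(x,w)$, $\Pr(Y=1\mid Y^*=0,x,w)\le\Pr(Y=0\mid Y^*=1,x,w)$. Then for every $x\in\mathcal X$, $$p^*(x)\in\left[\sup_{w\in\mathcal W}\left\{\frac{p_W(x,w)-\min\{\underline p_w(x,w),1-\bar p_w(x,w)\}}{1-\min\{\underline p_w(x,w),1-\bar p_w(x,w)\}}\right\},\ \inf_{w\in\mathcal W}\left\{\frac{p_W(x,w)}{\bar p_w(x,w)}\right\}\right].$$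
   Context: $Y^*$ is the true (unobserved) binary outcome and $Y$ the observed, possibly misreported outcome; conditioning on $\tilde x$ (resp. $x,w$) means conditioning on $\tilde X=\tilde x$ (resp. $X=x,W=w$). *)

theory Defs
  imports "HOL-Probability.Probability"
begin

text \<open>Conditional laws of the pair (Y*, Y) are modelled as pmfs on bool \<times> bool:
  the first component is the true outcome Y*, the second the observed outcome Y
  (True = 1, False = 0).\<close>

definition cprob :: "'a pmf \<Rightarrow> 'a set \<Rightarrow> 'a set \<Rightarrow> real" where
  "cprob P A B = measure_pmf.prob P (A \<inter> B) / measure_pmf.prob P B"

definition misrep :: "(bool \<times> bool) pmf \<Rightarrow> bool \<Rightarrow> real" where
  "misrep P y = cprob P {v. snd v = (\<not> y)} {v. fst v = y}"

definition probY :: "(bool \<times> bool) pmf \<Rightarrow> real" where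
  "probY P = measure_pmf.prob P {v. snd v}"

definition probYstar :: "(bool \<times> bool) pmf \<Rightarrow> real" where
  "probYstar P = measure_pmf.prob P {v. fst v}"

end

theory Submission
  imports Defs
begin

text \<open>Write a0 = Pr(Y = 1 | Y* = 0), a1 = Pr(Y = 0 | Y* = 1) and s = Pr(Y* = 1). The law of
  total probability gives Pr(Y = 1) = a0 (1 - s) + (1 - a1) s, a convex combination of a0 and
  1 - a1 when a0 + a1 \<le> 1. So every observed probability whose misreporting rates agree with
  (part 1) or, by monotonicity in w, dominate (part 2) those of the law at hand lies in
  [a0, 1 - a1], and the infimum I and supremum S of these probabilities satisfy a0 \<le> I and
  S \<le> 1 - a1. Both bounds on s now follow from the identity: s S \<le> s (1 - a1) \<le> Pr(Y = 1),
  and for m = min I (1 - S) \<ge> a0 one has Pr(Y = 1) - m = s (1 - m) + (a0 - m)(1 - s) - a1 s.\<close>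

lemma cprob_mult_prob: "cprob P A B * measure_pmf.prob P B = measure_pmf.prob P (A \<inter> B)"
proof (cases "measure_pmf.prob P B = 0")
  case True
  then show ?thesis
    using measure_pmf.finite_measure_mono[of "A \<inter> B" B P] by (simp add: antisym)
next
  case False
  then show ?thesis by (simp add: cprob_def)
qed

lemma probY_eq_misrep_mixture:
  "probY P = misrep P False * (1 - probYstar P) + (1 - misrep P True) * probYstar P"
proof -
  let ?Pr = "measure_pmf.prob P"
  have "probY P = ?Pr ({v. snd v} \<inter> {v. \<not> fst v}) + ?Pr ({v. snd v} \<inter> {v. fst v})"
    unfolding probY_def
    by (subst measure_pmf.finite_measure_Union[symmetric]) (auto intro: arg_cong[where f = ?Pr])
  also have "?Pr ({v. snd v} \<inter> {v. \<not> fst v}) = misrep P False * ?Pr (UNIV - {v. fst v})"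
    using cprob_mult_prob[of P "{v. snd v}" "{v. \<not> fst v}"] by (simp add: misrep_def set_diff_eq)
  also have "?Pr (UNIV - {v. fst v}) = 1 - probYstar P"
    unfolding probYstar_def by (simp add: measure_pmf.prob_compl[symmetric] Compl_eq_Diff_UNIV)
  also have "?Pr ({v. snd v} \<inter> {v. fst v}) = probYstar P - ?Pr ({v. \<not> snd v} \<inter> {v. fst v})"
    unfolding probYstar_def
    by (subst measure_pmf.finite_measure_Diff[symmetric]) (auto intro: arg_cong[where f = ?Pr])
  also have "?Pr ({v. \<not> snd v} \<inter> {v. fst v}) = misrep P True * probYstar P"
    using cprob_mult_prob[of P "{v. \<not> snd v}" "{v. fst v}"] by (simp add: misrep_def probYstar_def)
  finally show ?thesis by (simp add: algebra_simps)
qed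

lemma misrep_nonneg: "0 \<le> misrep P y"
  by (simp add: misrep_def cprob_def)

lemma probY_nonneg: "0 \<le> probY P"
  by (simp add: probY_def)

lemma probY_le_1: "probY P \<le> 1"
  by (simp add: probY_def)

lemma probYstar_nonneg: "0 \<le> probYstar P"
  by (simp add: probYstar_def)

lemma probYstar_le_1: "probYstar P \<le> 1"
  by (simp add: probYstar_def)

lemma convex_combination_bounds:
  fixes a0 a1 s :: real
  assumes "a0 + a1 \<le> 1" "0 \<le> s" "s \<le> 1"
  shows "a0 \<le> a0 * (1 - s) + (1 - a1) * s" and "a0 * (1 - s) + (1 - a1) * s \<le> 1 - a1"
proof -
  have "a0 * s \<le> (1 - a1) * s" "a0 * (1 - s) \<le> (1 - a1) * (1 - s)"
    using assms by (simp_all add: mult_right_mono)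
  then show "a0 \<le> a0 * (1 - s) + (1 - a1) * s" "a0 * (1 - s) + (1 - a1) * s \<le> 1 - a1"
    by (simp_all add: algebra_simps)
qed

lemma probY_bounds_misrep:
  assumes "misrep P False + misrep P True \<le> 1"
  shows "misrep P False \<le> probY P" and "probY P \<le> 1 - misrep P True"
  using convex_combination_bounds[OF assms probYstar_nonneg probYstar_le_1]
  by (simp_all add: probY_eq_misrep_mixture)

lemma convex_combination_weight_bounds:
  fixes a0 a1 s I S :: real
  assumes "0 \<le> a0" "0 \<le> a1" "0 \<le> s" "s \<le> 1" "a0 \<le> a1" "a0 \<le> I" "I < 1" "0 < S" "S \<le> 1 - a1"
  defines "f \<equiv> a0 * (1 - s) + (1 - a1) * s" and "m \<equiv> min I (1 - S)"
  shows "s \<in> {(f - m) / (1 - m) .. f / S}"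
  unfolding atLeastAtMost_iff
proof
  have "m < 1" "(a0 - m) * (1 - s) \<le> 0" "0 \<le> a1 * s"
    using assms by (auto simp: m_def mult_nonpos_nonneg)
  moreover have "f - m = s * (1 - m) + (a0 - m) * (1 - s) - a1 * s"
    by (simp add: f_def algebra_simps)
  ultimately show "(f - m) / (1 - m) \<le> s"
    by (simp add: divide_le_eq)
  have "s * S \<le> s * (1 - a1)"
    using assms by (intro mult_left_mono) auto
  also have "\<dots> \<le> f"
    using assms by (simp add: f_def mult.commute)
  finally show "s \<le> f / S"
    using assms by (simp add: le_divide_eq)
qed

lemma probYstar_bounds_envelope:
  fixes P :: "(bool \<times> bool) pmf" and G :: "'i \<Rightarrow> (bool \<times> bool) pmf"
  assumes "L \<noteq> {}"
    and lower: "\<And>l. l \<in> L \<Longrightarrow> misrep P False \<le> probY (G l)"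
    and upper: "\<And>l. l \<in> L \<Longrightarrow> probY (G l) \<le> 1 - misrep P True"
    and "misrep P False \<le> misrep P True"
    and "(INF l\<in>L. probY (G l)) < 1" and "0 < (SUP l\<in>L. probY (G l))"
  shows "probYstar P \<in>
    {(probY P - min (INF l\<in>L. probY (G l)) (1 - (SUP l\<in>L. probY (G l))))
       / (1 - min (INF l\<in>L. probY (G l)) (1 - (SUP l\<in>L. probY (G l)))) ..
     probY P / (SUP l\<in>L. probY (G l))}"
proof -
  have "misrep P False \<le> (INF l\<in>L. probY (G l))"
    using assms(1) lower by (rule cINF_greatest)
  moreover have "(SUP l\<in>L. probY (G l)) \<le> 1 - misrep P True"
    using assms(1) upper by (rule cSUP_least)
  ultimately show ?thesis
    using convex_combination_weight_bounds[OF misrep_nonneg misrep_nonneg probYstar_nonneg probYstar_le_1]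
      assms(4-6)
    by (simp add: probY_eq_misrep_mixture)
qed

lemma bdd_above_probY: "bdd_above ((\<lambda>i. probY (G i)) ` L)"
  by (rule bdd_aboveI2[where M = 1]) (rule probY_le_1)

lemma bdd_below_probY: "bdd_below ((\<lambda>i. probY (G i)) ` L)"
  by (rule bdd_belowI2[where m = 0]) (rule probY_nonneg)

lemma probYstar_bounds_common_misrep:
  fixes F :: "'z \<Rightarrow> (bool \<times> bool) pmf"
  assumes common: "\<And>z z' y. misrep (F z) y = misrep (F z') y"
    and sum_le_1: "\<And>z. misrep (F z) False + misrep (F z) True \<le> 1"
    and "\<And>z. misrep (F z) False \<le> misrep (F z) True"
    and "0 < (SUP z'. probY (F z'))" and "(INF z'. probY (F z')) < 1"
  shows "probYstar (F z) \<in>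
    {(probY (F z) - min (INF z'. probY (F z')) (1 - (SUP z'. probY (F z'))))
       / (1 - min (INF z'. probY (F z')) (1 - (SUP z'. probY (F z')))) ..
     probY (F z) / (SUP z'. probY (F z'))}"
proof (rule probYstar_bounds_envelope)
  fix z'
  show "misrep (F z) False \<le> probY (F z')" "probY (F z') \<le> 1 - misrep (F z) True"
    using probY_bounds_misrep[OF sum_le_1[of z']] common[where z = z and z' = z'] by simp_all
qed (use assms in auto)

lemma probYstar_bounds_antimono_misrep:
  fixes F :: "'w::linorder \<Rightarrow> (bool \<times> bool) pmf"
  assumes "W \<noteq> {}"
    and common: "\<And>w. w \<in> W \<Longrightarrow> probYstar (F w) = q"
    and antimono: "\<And>y w1 w2. w1 \<in> W \<Longrightarrow> w2 \<in> W \<Longrightarrow> w1 > w2 \<Longrightarrow> misrep (F w1) y \<le> misrep (F w2) y"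
    and sum_le_1: "\<And>w. w \<in> W \<Longrightarrow> misrep (F w) False + misrep (F w) True \<le> 1"
    and probY_pos: "\<And>w. w \<in> W \<Longrightarrow> 0 < probY (F w)"
    and probY_less_1: "\<And>w. w \<in> W \<Longrightarrow> probY (F w) < 1"
    and "\<And>w. w \<in> W \<Longrightarrow> misrep (F w) False \<le> misrep (F w) True"
  shows "q \<in>
    {(SUP w\<in>W. (probY (F w) - min (INF w'\<in>{w'\<in>W. w' \<le> w}. probY (F w'))
                                  (1 - (SUP w'\<in>{w'\<in>W. w' \<le> w}. probY (F w'))))
                / (1 - min (INF w'\<in>{w'\<in>W. w' \<le> w}. probY (F w'))
                           (1 - (SUP w'\<in>{w'\<in>W. w' \<le> w}. probY (F w'))))) ..
     (INF w\<in>W. probY (F w) / (SUP w'\<in>{w'\<in>W. w' \<le> w}. probY (F w')))}"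
proof -
  define I where "I w = (INF w'\<in>{w'\<in>W. w' \<le> w}. probY (F w'))" for w
  define S where "S w = (SUP w'\<in>{w'\<in>W. w' \<le> w}. probY (F w'))" for w
  have bounds: "q \<in> {(probY (F w) - min (I w) (1 - S w)) / (1 - min (I w) (1 - S w)) ..
                     probY (F w) / S w}" if "w \<in> W" for w
    unfolding I_def S_def common[OF that, symmetric]
  proof (rule probYstar_bounds_envelope)
    fix w' assume "w' \<in> {w'\<in>W. w' \<le> w}"
    then have "w' \<in> W" and rates: "misrep (F w) y \<le> misrep (F w') y" for y
      using antimono[OF that] by (cases "w' = w"; auto)+
    then show "misrep (F w) False \<le> probY (F w')" "probY (F w') \<le> 1 - misrep (F w) True"
      using probY_bounds_misrep[OF sum_le_1] rates[of False] rates[of True] by fastforce+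
  next
    have w: "w \<in> {w'\<in>W. w' \<le> w}"
      using that by simp
    show "(INF w'\<in>{w'\<in>W. w' \<le> w}. probY (F w')) < 1"
      using cINF_lower[OF bdd_below_probY[of F] w] probY_less_1[OF that] by linarith
    show "0 < (SUP w'\<in>{w'\<in>W. w' \<le> w}. probY (F w'))"
      using cSUP_upper[OF w bdd_above_probY[of F]] probY_pos[OF that] by linarith
  qed (use that assms in auto)
  have "(SUP w\<in>W. (probY (F w) - min (I w) (1 - S w)) / (1 - min (I w) (1 - S w))) \<le> q"
    using assms(1) bounds by (intro cSUP_least) auto
  moreover have "q \<le> (INF w\<in>W. probY (F w) / S w)"
    using assms(1) bounds by (intro cINF_greatest) auto
  ultimately show ?thesis
    unfolding I_def S_def by simp
qed

theorem proposition5: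
  shows
  "(\<forall>(K :: 'a \<times> 'z::finite \<Rightarrow> (bool \<times> bool) pmf) (Zd :: 'a \<Rightarrow> 'z pmf).
      (\<forall>xt z y. misrep (K (xt, z)) y = misrep (bind_pmf (Zd xt) (\<lambda>z'. K (xt, z'))) y) \<and>
      (\<forall>xt. misrep (bind_pmf (Zd xt) (\<lambda>z'. K (xt, z'))) True
            + misrep (bind_pmf (Zd xt) (\<lambda>z'. K (xt, z'))) False \<le> 1) \<and>
      (\<forall>xt. (SUP z'. probY (K (xt, z'))) > 0 \<and> (INF z'. probY (K (xt, z'))) < 1) \<and>
      (\<forall>xt. misrep (bind_pmf (Zd xt) (\<lambda>z'. K (xt, z'))) False
            \<le> misrep (bind_pmf (Zd xt) (\<lambda>z'. K (xt, z'))) True)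
      \<longrightarrow>
      (\<forall>xt z.
         probYstar (K (xt, z)) \<in>
           {(probY (K (xt, z)) - min (INF z'. probY (K (xt, z'))) (1 - (SUP z'. probY (K (xt, z')))))
              / (1 - min (INF z'. probY (K (xt, z'))) (1 - (SUP z'. probY (K (xt, z'))))) ..
            probY (K (xt, z)) / (SUP z'. probY (K (xt, z')))}))
   \<and>
   (\<forall>(K2 :: 'x \<Rightarrow> real \<Rightarrow> (bool \<times> bool) pmf) (Wd :: 'x \<Rightarrow> real pmf) (Ws :: real set).
      finite Ws \<and>
      (\<forall>x. set_pmf (Wd x) \<subseteq> Ws) \<and>
      (\<forall>x. \<forall>w\<in>Ws. probYstar (K2 x w) = probYstar (bind_pmf (Wd x) (K2 x))) \<and>
      (\<forall>x y. \<forall>w1\<in>Ws. \<forall>w2\<in>Ws. w1 > w2 \<longrightarrow> misrep (K2 x w1) y \<le> misrep (K2 x w2) y) \<and>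
      (\<forall>x. \<forall>w\<in>Ws. misrep (K2 x w) False + misrep (K2 x w) True \<le> 1
                    \<and> 0 < probY (K2 x w) \<and> probY (K2 x w) < 1) \<and>
      (\<forall>x. \<forall>w\<in>Ws. misrep (K2 x w) False \<le> misrep (K2 x w) True)
      \<longrightarrow>
      (\<forall>x.
         probYstar (bind_pmf (Wd x) (K2 x)) \<in>
           {(SUP w\<in>Ws.
               (probY (K2 x w) - min (INF w'\<in>{w'\<in>Ws. w' \<le> w}. probY (K2 x w'))
                                     (1 - (SUP w'\<in>{w'\<in>Ws. w' \<le> w}. probY (K2 x w'))))
               / (1 - min (INF w'\<in>{w'\<in>Ws. w' \<le> w}. probY (K2 x w'))
                          (1 - (SUP w'\<in>{w'\<in>Ws. w' \<le> w}. probY (K2 x w'))))) ..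
            (INF w\<in>Ws. probY (K2 x w) / (SUP w'\<in>{w'\<in>Ws. w' \<le> w}. probY (K2 x w')))}))"
proof (intro conjI allI impI, goal_cases)
  case (1 K Zd xt z)
  then show ?case
    by (intro probYstar_bounds_common_misrep) (auto simp: add.commute)
next
  case (2 K2 Wd Ws x)
  moreover have "Ws \<noteq> {}"
    using 2 set_pmf_not_empty[of "Wd x"] by blast
  ultimately show ?case
    by (intro probYstar_bounds_antimono_misrep) auto
qed

end
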